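(* Let $G$ be an $(N,k)$ Adinkra obtained from an $N$-cube Adinkra by quotienting by a doubly even $(N,k)$ code $C$ (vertices labeled by cosets $x+C$), with the matrices $\gamma_i$ defined as in the context. Let $M=\gamma_{i_1}\cdots\gamma_{i_t}$ and let $p\in\mathbb{Z}_2^N$ be the vector with $p_i=1$ exactly for the colors $i$ occurring an odd number of times in $(i_1,\dots,i_t)$. Suppose $p$ is a nonzero codeword of $C$ and $M_{x,x}=\pm1$ for all vertices $x$. Then for any two vertices $x+C$ and $y+C$, $M_{x+C,x+C}=M_{y+C,y+C}$ if and only if $\langle x,p\rangle\equiv\langle y,p\rangle\pmod 2$.
   Context: An Adinkra of dimension $N$ is a finite connected simple graph $G=(V,E)$ with: a bipartition of $V$ into bosons and fermions (every edge joins a boson and a fermion); a height function (irrelevant here); a coloring of $E$ by colors $\{1,\dots,N\}$ such that each vertex is incident to exactly one edge of each color; an edge parity $\pi:E\to\mathbb{Z}_2$ (parity $1$ = dashed); such that every path with edge colors $(i,j)$, $i\ne j$, lies in a unique 4-cycle with colors $(i,j,i,j)$, each having an odd number of dashed edges. If $|V|=2^{N-k}$, $G$ is an $(N,k)$ Adinkra; it has $n=2^{N-k-1}$ bosons $b_1,\dots,b_n$ and $n$ fermions $f_1,\dots,f_n$. A doubly even $(N,k)$ code $C$ is a $k$-dimensional subspace of $\mathbb{Z}_2^N$ all of whose elements have weight $\equiv0\pmod4$; $\langle u,v\rangle=\sum_iu_iv_i\bmod2$, and $\langle x,c\rangle$ for $c\in C$ depends only on $x+C$. Quotient construction: label the vertices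 of an $N$-cube Adinkra by $\mathbb{Z}_2^N$ so that color-$i$ edges join $v$ and $v+e_i$, and identify vertices whose labels differ by elements of $C$; the result has vertices $x+C$ and color-$i$ edges joining $x+C$ and $x+e_i+C$. For each color $i$, $L_i$ is the $n\times n$ matrix with $(L_i)_{r,s}=+1$ if $b_r,f_s$ are joined by a solid edge of color $i$, $-1$ if joined by a dashed edge of color $i$, $0$ otherwise; $\gamma_i=\begin{pmatrix}0&L_i\\ L_i^{T}&0\end{pmatrix}$, rows and columns indexed by $V$. *)

theory Defs
  imports Main
begin

text \<open>Vectors of Z_2^N are represented as subsets of {..<N} (the support);
  addition is symmetric difference, the unit vector e_i is {i}, weight is card,
  and the inner product <u,v> is card (u \<inter> v) mod 2. Colors are 0..N-1.\<close>

definition vsum :: "nat set \<Rightarrow> nat set \<Rightarrow> nat set" where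
  "vsum u v = (u - v) \<union> (v - u)"

definition ip :: "nat set \<Rightarrow> nat set \<Rightarrow> nat" where
  "ip u v = card (u \<inter> v) mod 2"

definition doubly_even_code :: "nat \<Rightarrow> nat \<Rightarrow> nat set set \<Rightarrow> bool" where
  "doubly_even_code N k C \<longleftrightarrow>
     C \<subseteq> Pow {..<N} \<and> {} \<in> C \<and> (\<forall>u\<in>C. \<forall>v\<in>C. vsum u v \<in> C) \<and>
     card C = 2 ^ k \<and> (\<forall>c\<in>C. 4 dvd card c)"

definition coset :: "nat set set \<Rightarrow> nat set \<Rightarrow> nat set set" where
  "coset C x = (\<lambda>c. vsum x c) ` C"

definition verts :: "nat \<Rightarrow> nat set set \<Rightarrow> nat set set set" where
  "verts N C = coset C ` Pow {..<N}"

definition nbr :: "nat \<Rightarrow> nat set set \<Rightarrow> nat set set" where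
  "nbr i v = (\<lambda>y. vsum y {i}) ` v"

text \<open>An edge parity on the quotient graph: the edge of color i at vertex v is
  identified with the pair (v,i); pi v i = True means dashed. It must be well defined
  on edges (same value seen from both endpoints), and every 2-colored 4-cycle
  v, v+e_i, v+e_i+e_j, v+e_j (the unique (i,j,i,j) 4-cycle through any (i,j)-path)
  has an odd number of dashed edges.\<close>
definition adinkra_dashing :: "nat \<Rightarrow> nat set set \<Rightarrow> (nat set set \<Rightarrow> nat \<Rightarrow> bool) \<Rightarrow> bool" where
  "adinkra_dashing N C \<pi> \<longleftrightarrow>
     (\<forall>v\<in>verts N C. \<forall>i<N. \<pi> (nbr i v) i = \<pi> v i) \<and>
     (\<forall>v\<in>verts N C. \<forall>i<N. \<forall>j<N. i \<noteq> j \<longrightarrow>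
        odd (of_bool (\<pi> v i) + of_bool (\<pi> (nbr i v) j) + of_bool (\<pi> (nbr j v) i)
             + of_bool (\<pi> v j) :: nat))"

text \<open>gamma_i as a V x V matrix: entry +1/-1 for a solid/dashed color-i edge, 0 otherwise.
  (Its off-diagonal blocks are L_i and L_i^T.)\<close>
definition gamma :: "(nat set set \<Rightarrow> nat \<Rightarrow> bool) \<Rightarrow> nat \<Rightarrow> nat set set \<Rightarrow> nat set set \<Rightarrow> int" where
  "gamma \<pi> i u v = (if v = nbr i u then (if \<pi> u i then -1 else 1) else 0)"

definition mmult :: "'v set \<Rightarrow> ('v \<Rightarrow> 'v \<Rightarrow> int) \<Rightarrow> ('v \<Rightarrow> 'v \<Rightarrow> int) \<Rightarrow> 'v \<Rightarrow> 'v \<Rightarrow> int" where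
  "mmult V A B u w = (\<Sum>v\<in>V. A u v * B v w)"

fun gprod :: "nat \<Rightarrow> nat set set \<Rightarrow> (nat set set \<Rightarrow> nat \<Rightarrow> bool) \<Rightarrow> nat list \<Rightarrow> nat set set \<Rightarrow> nat set set \<Rightarrow> int" where
  "gprod N C \<pi> [] = (\<lambda>u v. if u = v then 1 else 0)"
| "gprod N C \<pi> (i # is) = mmult (verts N C) (gamma \<pi> i) (gprod N C \<pi> is)"

definition odd_colors :: "nat \<Rightarrow> nat list \<Rightarrow> nat set" where
  "odd_colors N is = {i. i < N \<and> odd (count_list is i)}"

end

theory Submission
  imports Defs
begin

text \<open>Each gamma_i is a signed permutation matrix, so M sends a vertex v to the end of the
  walk from v along the colors of the word, weighted by the product of the edge signs met on
  the way. From v = x + C that walk ends at x + p + C = x + C, so M_vv is this sign. Comparing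
  the walks from v and from its color-j neighbour step by step, every step of a color i \<noteq> j
  closes an (i,j,i,j) 4-cycle with an odd number of dashed edges, so the two signs differ by
  (-1)^(t + #j), where #j counts the occurrences of j in the word. As t \<equiv> wt p \<equiv> 0 (mod 2),
  flipping coordinate j of x flips M_xx exactly when p_j = 1; hence M_xx = (-1)^<x,p> M_00.\<close>

definition dash_sign :: "bool \<Rightarrow> int" where
  "dash_sign b = (if b then -1 else 1)"

fun walk :: "nat list \<Rightarrow> nat set set \<Rightarrow> nat set set" where
  "walk [] v = v"
| "walk (i # is) v = walk is (nbr i v)"

fun walk_sign :: "(nat set set \<Rightarrow> nat \<Rightarrow> bool) \<Rightarrow> nat list \<Rightarrow> nat set set \<Rightarrow> int" where
  "walk_sign \<pi> [] v = 1"
| "walk_sign \<pi> (i # is) v = dash_sign (\<pi> v i) * walk_sign \<pi> is (nbr i v)"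

lemma dash_sign_square [simp]: "dash_sign b * dash_sign b = 1"
  by (simp add: dash_sign_def)

lemma walk_sign_square [simp]: "walk_sign \<pi> w v * walk_sign \<pi> w v = 1"
proof (induction w arbitrary: v)
  case (Cons i w)
  have "walk_sign \<pi> (i # w) v * walk_sign \<pi> (i # w) v
      = (dash_sign (\<pi> v i) * dash_sign (\<pi> v i))
        * (walk_sign \<pi> w (nbr i v) * walk_sign \<pi> w (nbr i v))"
    by (simp add: algebra_simps)
  with Cons.IH show ?case by simp
qed simp

lemma vsum_assoc: "vsum (vsum a b) c = vsum a (vsum b c)"
  unfolding vsum_def by blast

lemma vsum_commute: "vsum a b = vsum b a"
  unfolding vsum_def by blast

lemma vsum_cancel: "vsum (vsum a b) b = a"
  unfolding vsum_def by blast

lemma nbr_coset: "nbr i (coset C x) = coset C (vsum x {i})"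
  unfolding nbr_def coset_def image_image
  by (rule image_cong) (auto simp: vsum_assoc vsum_commute[of "{i}"])

lemma nbr_commute: "nbr i (nbr j v) = nbr j (nbr i v)"
  unfolding nbr_def image_image
  by (rule image_cong) (auto simp: vsum_assoc vsum_commute[of "{i}"])

lemma nbr_in_verts: "v \<in> verts N C \<Longrightarrow> i < N \<Longrightarrow> nbr i v \<in> verts N C"
  unfolding verts_def by (auto simp: nbr_coset vsum_def)

lemma coset_in_verts: "x \<subseteq> {..<N} \<Longrightarrow> coset C x \<in> verts N C"
  unfolding verts_def by auto

lemma finite_verts: "finite (verts N C)"
  unfolding verts_def by simp

lemma gprod_eq_walk_sign:
  assumes "v \<in> verts N C" "set w \<subseteq> {..<N}"
  shows "gprod N C \<pi> w v z = (if z = walk w v then walk_sign \<pi> w v else 0)"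
  using assms
proof (induction w arbitrary: v)
  case (Cons i w)
  have nv: "nbr i v \<in> verts N C"
    using Cons.prems nbr_in_verts by auto
  have "gprod N C \<pi> (i # w) v z = (\<Sum>u\<in>verts N C. gamma \<pi> i v u * gprod N C \<pi> w u z)"
    by (simp add: mmult_def)
  also have "\<dots> = (\<Sum>u\<in>verts N C.
      if u = nbr i v then dash_sign (\<pi> v i) * gprod N C \<pi> w (nbr i v) z else 0)"
    by (rule sum.cong) (auto simp: gamma_def dash_sign_def)
  also have "\<dots> = dash_sign (\<pi> v i) * gprod N C \<pi> w (nbr i v) z"
    using nv finite_verts by (simp add: sum.delta')
  also have "\<dots> = (if z = walk (i # w) v then walk_sign \<pi> (i # w) v else 0)"
    using Cons.IH[OF nv] Cons.prems by simp
  finally show ?case .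
qed simp

lemma odd_colors_Cons: "i < N \<Longrightarrow> odd_colors N (i # is) = vsum {i} (odd_colors N is)"
  unfolding odd_colors_def vsum_def by auto

lemma walk_coset:
  assumes "set w \<subseteq> {..<N}"
  shows "walk w (coset C x) = coset C (vsum x (odd_colors N w))"
  using assms
proof (induction w arbitrary: x)
  case Nil
  have "vsum x (odd_colors N []) = x"
    by (simp add: odd_colors_def vsum_def)
  then show ?case by simp
next
  case (Cons i w)
  then show ?case by (simp add: nbr_coset odd_colors_Cons vsum_assoc)
qed

lemma coset_vsum_codeword:
  assumes closed: "\<forall>u\<in>C. \<forall>v\<in>C. vsum u v \<in> C" and p: "p \<in> C"
  shows "coset C (vsum x p) = coset C x"
  unfolding coset_def
proof
  show "(\<lambda>c. vsum (vsum x p) c) ` C \<subseteq> (\<lambda>c. vsum x c) ` C"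
    using assms by (auto simp: vsum_assoc)
  show "(\<lambda>c. vsum x c) ` C \<subseteq> (\<lambda>c. vsum (vsum x p) c) ` C"
  proof
    fix z assume "z \<in> (\<lambda>c. vsum x c) ` C"
    then obtain c where c: "c \<in> C" "z = vsum x c" by auto
    have "vsum p c \<in> C" using closed p c by auto
    moreover have "z = vsum (vsum x p) (vsum p c)"
      using c by (metis vsum_assoc vsum_commute vsum_cancel)
    ultimately show "z \<in> (\<lambda>c. vsum (vsum x p) c) ` C" by blast
  qed
qed

lemma walk_coset_codeword:
  assumes "\<forall>u\<in>C. \<forall>v\<in>C. vsum u v \<in> C" "odd_colors N w \<in> C" "set w \<subseteq> {..<N}"
  shows "walk w (coset C x) = coset C x"
  using assms by (simp add: walk_coset coset_vsum_codeword)

lemma dash_sign_commute: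
  assumes adk: "adinkra_dashing N C \<pi>" and v: "v \<in> verts N C" and "i < N" "j < N"
  shows "dash_sign (\<pi> (nbr j v) i) * dash_sign (\<pi> v i)
       = (if i = j then 1 else -1) * dash_sign (\<pi> v j) * dash_sign (\<pi> (nbr i v) j)"
proof (cases "i = j")
  case True
  then have "\<pi> (nbr j v) j = \<pi> v j"
    using adk v assms by (auto simp: adinkra_dashing_def)
  with True show ?thesis by (simp add: dash_sign_def)
next
  case False
  then have "odd (of_bool (\<pi> v i) + of_bool (\<pi> (nbr i v) j) + of_bool (\<pi> (nbr j v) i)
             + of_bool (\<pi> v j) :: nat)"
    using adk v assms unfolding adinkra_dashing_def by auto
  with False show ?thesis
    by (cases "\<pi> v i"; cases "\<pi> (nbr i v) j"; cases "\<pi> (nbr j v) i"; cases "\<pi> v j")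
       (simp_all add: dash_sign_def)
qed

lemma walk_sign_nbr:
  assumes adk: "adinkra_dashing N C \<pi>" and "v \<in> verts N C" "set w \<subseteq> {..<N}" and j: "j < N"
  shows "walk_sign \<pi> w (nbr j v) * walk_sign \<pi> w v
       = (-1) ^ (length w + count_list w j) * dash_sign (\<pi> v j) * dash_sign (\<pi> (walk w v) j)"
  using assms(2,3)
proof (induction w arbitrary: v)
  case (Cons i w)
  have i: "i < N" using Cons.prems by auto
  have nv: "nbr i v \<in> verts N C" using Cons.prems nbr_in_verts i by auto
  have w: "set w \<subseteq> {..<N}" using Cons.prems by simp
  have "walk_sign \<pi> (i # w) (nbr j v) * walk_sign \<pi> (i # w) v
     = (dash_sign (\<pi> (nbr j v) i) * dash_sign (\<pi> v i))
       * (walk_sign \<pi> w (nbr j (nbr i v)) * walk_sign \<pi> w (nbr i v))"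
    by (simp add: nbr_commute algebra_simps)
  also have "\<dots> = (if i = j then 1 else -1) * dash_sign (\<pi> v j)
      * (dash_sign (\<pi> (nbr i v) j) * dash_sign (\<pi> (nbr i v) j))
      * (-1) ^ (length w + count_list w j) * dash_sign (\<pi> (walk w (nbr i v)) j)"
    unfolding dash_sign_commute[OF adk Cons.prems(1) i j] Cons.IH[OF nv w]
    by (simp add: algebra_simps)
  also have "\<dots> = (-1) ^ (length (i # w) + count_list (i # w) j)
      * dash_sign (\<pi> v j) * dash_sign (\<pi> (walk (i # w) v) j)"
    by simp
  finally show ?case .
qed simp

lemma even_length_iff_even_card_odd_colors:
  assumes "set w \<subseteq> {..<N}"
  shows "even (length w) \<longleftrightarrow> even (card (odd_colors N w))"
proof -
  have "length w = (\<Sum>i<N. count_list w i)"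
    using sum_count_set[OF assms] by simp
  then show ?thesis
    by (simp add: even_sum_iff odd_colors_def)
qed

lemma walk_sign_nbr_fixed:
  assumes adk: "adinkra_dashing N C \<pi>" and v: "v \<in> verts N C" "walk w v = v"
    and w: "set w \<subseteq> {..<N}" "even (length w)" and j: "j < N"
  shows "walk_sign \<pi> w (nbr j v) = (-1) ^ count_list w j * walk_sign \<pi> w v"
proof -
  have "walk_sign \<pi> w (nbr j v) * walk_sign \<pi> w v = (-1) ^ count_list w j"
    using walk_sign_nbr[OF adk v(1) w(1) j] v(2) w(2) by (simp add: power_add)
  then have "walk_sign \<pi> w (nbr j v) * (walk_sign \<pi> w v * walk_sign \<pi> w v)
      = (-1) ^ count_list w j * walk_sign \<pi> w v"
    by (metis mult.assoc)
  then show ?thesis by simp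
qed

lemma walk_sign_coset:
  assumes adk: "adinkra_dashing N C \<pi>" and closed: "\<forall>u\<in>C. \<forall>v\<in>C. vsum u v \<in> C"
    and p: "odd_colors N w \<in> C" and w: "set w \<subseteq> {..<N}" "even (length w)"
    and x: "x \<subseteq> {..<N}"
  shows "walk_sign \<pi> w (coset C x) = (-1) ^ card (x \<inter> odd_colors N w) * walk_sign \<pi> w (coset C {})"
proof -
  have "finite x" using x finite_subset by blast
  then show ?thesis using x
  proof (induction x rule: finite_induct)
    case (insert j x)
    let ?P = "odd_colors N w"
    have j: "j < N" and x: "x \<subseteq> {..<N}" using insert.prems by auto
    have "vsum x {j} = insert j x" using insert.hyps unfolding vsum_def by auto
    then have "coset C (insert j x) = nbr j (coset C x)" by (simp add: nbr_coset)
    then have "walk_sign \<pi> w (coset C (insert j x)) = (-1) ^ count_list w j * walk_sign \<pi> w (coset C x)"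
      using walk_sign_nbr_fixed[OF adk coset_in_verts[OF x] walk_coset_codeword[OF closed p w(1)] w j]
      by simp
    moreover have "(-1 :: int) ^ count_list w j = (if j \<in> ?P then -1 else 1)"
      using j by (simp add: odd_colors_def minus_one_power_iff)
    moreover have "card (insert j x \<inter> ?P) = (if j \<in> ?P then Suc (card (x \<inter> ?P)) else card (x \<inter> ?P))"
      using insert.hyps by (auto simp: Int_insert_left)
    ultimately show ?case using insert.IH[OF x] by simp
  qed simp
qed

theorem mainTheorem13:
  fixes N k :: nat and C :: "nat set set" and \<pi> :: "nat set set \<Rightarrow> nat \<Rightarrow> bool"
    and cols :: "nat list"
  assumes code: "doubly_even_code N k C"
    and adk: "adinkra_dashing N C \<pi>"
    and cols_ok: "set cols \<subseteq> {..<N}"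
    and p_code: "odd_colors N cols \<in> C"
    and p_nz: "odd_colors N cols \<noteq> {}"
    and diag: "\<forall>v\<in>verts N C. gprod N C \<pi> cols v v = 1 \<or> gprod N C \<pi> cols v v = -1"
    and x: "x \<subseteq> {..<N}" and y: "y \<subseteq> {..<N}"
  shows "gprod N C \<pi> cols (coset C x) (coset C x) = gprod N C \<pi> cols (coset C y) (coset C y)
         \<longleftrightarrow> ip x (odd_colors N cols) = ip y (odd_colors N cols)"
proof -
  have closed: "\<forall>u\<in>C. \<forall>v\<in>C. vsum u v \<in> C" and "4 dvd card (odd_colors N cols)"
    using code p_code by (auto simp: doubly_even_code_def)
  then have even_len: "even (length cols)"
    using even_length_iff_even_card_odd_colors[OF cols_ok] by (metis dvd_trans even_numeral)
  have diag_sign: "gprod N C \<pi> cols (coset C z) (coset C z)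
      = (-1) ^ card (z \<inter> odd_colors N cols) * walk_sign \<pi> cols (coset C {})"
    if "z \<subseteq> {..<N}" for z
    using gprod_eq_walk_sign[OF coset_in_verts[OF that] cols_ok]
      walk_coset_codeword[OF closed p_code cols_ok]
      walk_sign_coset[OF adk closed p_code cols_ok even_len that] by simp
  have "walk_sign \<pi> cols (coset C {}) \<noteq> 0"
    by (metis walk_sign_square mult_zero_left zero_neq_one)
  then show ?thesis
    unfolding diag_sign[OF x] diag_sign[OF y] ip_def
    by (simp add: minus_one_power_iff even_iff_mod_2_eq_zero odd_iff_mod_2_eq_one split: if_splits)
qed

end
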